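(* Assume Hypotheses 1, 2 and 3 (see context). For any fixed $\mathbf{z}\in\mathbb{R}^m$, the map $\Gamma\to\mathbb{R}^n$, $x\mapsto H(x)\mathbf{z}$, is continuous.
   Context: System $\dot x=F(x)$ with $F=(f,g)$, i.e. $\dot a=f(a,z)$, $\dot z=g(a,z)$, $(a,z)\in\mathbb{R}^n\times\mathbb{R}^m$, $X=\mathbb{R}^n\times\mathbb{R}^m$, flow $\Phi(t,x)$. Euclidean inner product, norm, operator norm. $\mathcal{L}(x_1,x_2)=\|a_2-a_1\|^2-\|z_2-z_1\|^2$, $\mathcal{C}(x)=\{x'\in X:\mathcal{L}(x',x)\ge0\}$, $\mathbf{0}$ the zero vector of $X$; $\Pi(a,z)=a$, $\Pi_\perp(a,z)=z$; $\mathbb{B}_d(x)=\{(a',z'):\|a'-a\|\le d,\|z'-z\|\le d\}$. $\Gamma\subseteq U$ positively invariant means $\Phi(t,x)$ is defined for all $t\ge0$ for $x\in\Gamma$ and $\Phi(t,\Gamma)\subseteq\Gamma$. Hypothesis 1: $U$ open and convex, and there is $d>0$ with $\mathcal{C}(x)\cap U\subset\mathbb{B}_d(x)$ for all $x\in U$. Hypothesis 2: $f,g$ are $C^1$ on $U$; there exist continuous $\alpha>0$, $\ell\ge0$ on $U$ and $c_1>0$ with, for all $x\in U$: $\langle a',D_af(x)a'\rangle\ge\alpha(x)\|a'\|^2$; $\langle z',D_zg(x)z'\rangle\le\ell(x)\|z'\|^2$; $\alpha(x)\ge\ell(x)+\|D_zf(x)\|+\|D_ag(x)\|+c_1$. Hypothesis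 3: $\Gamma\subset U$ is positively invariant and $\Pi_\perp(\Gamma)=\Pi_\perp(U)$. For $x\in\Gamma$, $Q(t,x)$ ($t\ge0$) denotes the fundamental matrix solution of $\dot{\mathbf{x}}=DF(\Phi(t,x))\mathbf{x}$ with $Q(0,x)=I$, and $T(x):=\{\mathbf{x}\in X: \mathcal{L}(Q(t,x)\mathbf{x},\mathbf{0})\le0\text{ for all }t\ge0\}$. Under these hypotheses each $T(x)$ is a linear subspace meeting each slice $\{(\mathbf{a},\mathbf{z}):\mathbf{a}\in\mathbb{R}^n\}$ in exactly one point, so there is a unique linear map $H(x):\mathbb{R}^m\to\mathbb{R}^n$ with $T(x)=\{(H(x)\mathbf{z},\mathbf{z}):\mathbf{z}\in\mathbb{R}^m\}$. *)

theory Defs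
  imports "HOL-Analysis.Analysis"
begin

text \<open>State space X = R^n x R^m is modelled as the product type 'a \<times> 'b of two
  Euclidean spaces; a point is (a, z).\<close>

definition Lfun :: "('a::euclidean_space \<times> 'b::euclidean_space) \<Rightarrow> ('a \<times> 'b) \<Rightarrow> real" where
  "Lfun x1 x2 = (norm (fst x2 - fst x1))^2 - (norm (snd x2 - snd x1))^2"

definition Ccone :: "('a::euclidean_space \<times> 'b::euclidean_space) \<Rightarrow> ('a \<times> 'b) set" where
  "Ccone x = {x'. Lfun x' x \<ge> 0}"

definition boxd :: "real \<Rightarrow> ('a::euclidean_space \<times> 'b::euclidean_space) \<Rightarrow> ('a \<times> 'b) set" where
  "boxd d x = {x'. norm (fst x' - fst x) \<le> d \<and> norm (snd x' - snd x) \<le> d}"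

text \<open>T(x): Q is the fundamental solution (as a function of the initial vector).\<close>
definition Tsp :: "(real \<Rightarrow> ('a::euclidean_space \<times> 'b::euclidean_space) \<Rightarrow> ('a \<times> 'b) \<Rightarrow> ('a \<times> 'b))
     \<Rightarrow> ('a \<times> 'b) \<Rightarrow> ('a \<times> 'b) set" where
  "Tsp Q x = {v. \<forall>t\<ge>0. Lfun (Q t x v) 0 \<le> 0}"

definition Hmap :: "(real \<Rightarrow> ('a::euclidean_space \<times> 'b::euclidean_space) \<Rightarrow> ('a \<times> 'b) \<Rightarrow> ('a \<times> 'b))
     \<Rightarrow> ('a \<times> 'b) \<Rightarrow> 'b \<Rightarrow> 'a" where
  "Hmap Q x zz = (THE aa. (aa, zz) \<in> Tsp Q x)"

end

theory Submission
  imports Defs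
begin

(* For x in Gamma, T(x) consists of the initial vectors whose solution of the variational equation
   v' = DF(Phi(t,x)) v stays in the closed negative cone {|a| <= |z|} for all t >= 0, and H(x) z is
   the unique a with (a, z) in T(x).  The proof runs as follows.
   1. Calculus tools: Gronwall-type estimates, a first-exit (continuous induction) principle, a
      growth lemma for a ratio P/D, and a sequential closed-graph criterion for continuity.
   2. Hypothesis 2 turns into pointwise cone estimates for the Jacobian (locale cone_field).
   3. Along orbits (locale cone_flow): Q(t,x) is a linear isomorphism; the positive cone is
      forward invariant; a compactness argument gives some (a, z) in T(x); the ratio lemma shows
      that a is unique, so H(x) z is well defined and |H(x) z| <= |z|.
   4. Q(t,x) v depends continuously on (x, v) (Gronwall on nearby orbits); hence the graph of
      H(.) z is sequentially closed, and since it takes values in a compact ball it is continuous. *)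

lemma nonneg_deriv_imp_le:
  fixes h h' :: "real \<Rightarrow> real"
  assumes "a \<le> b" and "continuous_on {a..b} h"
    and "\<And>s. a < s \<Longrightarrow> s < b \<Longrightarrow> (h has_real_derivative h' s) (at s)"
    and "\<And>s. a < s \<Longrightarrow> s < b \<Longrightarrow> h' s \<ge> 0"
  shows "h a \<le> h b"
  by (rule DERIV_nonneg_imp_increasing_open[OF assms(1) _ assms(2)]) (use assms in blast)

lemma gronwall_forward:
  fixes h h' :: "real \<Rightarrow> real"
  assumes ab: "a \<le> b" and hc: "continuous_on {a..b} h"
    and hd: "\<And>s. a < s \<Longrightarrow> s < b \<Longrightarrow> (h has_real_derivative h' s) (at s)"
    and hle: "\<And>s. a < s \<Longrightarrow> s < b \<Longrightarrow> h' s \<le> c * h s + e"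
    and c: "c \<ge> 0" and e: "e \<ge> 0"
  shows "h b \<le> exp (c * (b - a)) * (h a + e * (b - a))"
proof -
  define \<phi> where "\<phi> s = e * (s - a) - exp (- c * (s - a)) * h s" for s
  have "\<phi> a \<le> \<phi> b"
  proof (rule nonneg_deriv_imp_le[OF ab, of \<phi>
      "\<lambda>s. e - (exp (- c * (s - a)) * h' s - c * exp (- c * (s - a)) * h s)"])
    show "continuous_on {a..b} \<phi>" unfolding \<phi>_def by (intro continuous_intros hc)
    fix s assume s: "a < s" "s < b"
    show "(\<phi> has_real_derivative e - (exp (- c * (s - a)) * h' s - c * exp (- c * (s - a)) * h s)) (at s)"
      unfolding \<phi>_def[abs_def] using hd[OF s]
      by (auto intro!: derivative_eq_intros simp: algebra_simps)
    have "exp (- c * (s - a)) \<le> 1" using c s by simp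
    hence "exp (- c * (s - a)) * e \<le> e" using e by (simp add: mult_left_le_one_le)
    moreover have "exp (- c * (s - a)) * h' s \<le> exp (- c * (s - a)) * (c * h s + e)"
      using hle[OF s] by (intro mult_left_mono) auto
    ultimately show "0 \<le> e - (exp (- c * (s - a)) * h' s - c * exp (- c * (s - a)) * h s)"
      by (simp add: algebra_simps)
  qed
  hence "exp (- c * (b - a)) * h b \<le> h a + e * (b - a)" unfolding \<phi>_def by simp
  hence "exp (c * (b - a)) * (exp (- c * (b - a)) * h b) \<le> exp (c * (b - a)) * (h a + e * (b - a))"
    by (intro mult_left_mono) auto
  thus ?thesis by (simp add: mult.assoc[symmetric] exp_add[symmetric])
qed

lemma gronwall_backward:
  fixes h h' :: "real \<Rightarrow> real"
  assumes ab: "a \<le> b" and hc: "continuous_on {a..b} h"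
    and hd: "\<And>s. a < s \<Longrightarrow> s < b \<Longrightarrow> (h has_real_derivative h' s) (at s)"
    and hge: "\<And>s. a < s \<Longrightarrow> s < b \<Longrightarrow> h' s \<ge> - c * h s"
  shows "h a \<le> exp (c * (b - a)) * h b"
proof -
  have "exp (c * (a - a)) * h a \<le> exp (c * (b - a)) * h b"
  proof (rule nonneg_deriv_imp_le[OF ab, of "\<lambda>s. exp (c * (s - a)) * h s"
      "\<lambda>s. exp (c * (s - a)) * (h' s + c * h s)"])
    show "continuous_on {a..b} (\<lambda>s. exp (c * (s - a)) * h s)" by (intro continuous_intros hc)
    fix s assume s: "a < s" "s < b"
    show "((\<lambda>s. exp (c * (s - a)) * h s) has_real_derivative exp (c * (s - a)) * (h' s + c * h s)) (at s)"
      using hd[OF s] by (auto intro!: derivative_eq_intros simp: algebra_simps)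
    show "0 \<le> exp (c * (s - a)) * (h' s + c * h s)" using hge[OF s] by simp
  qed
  thus ?thesis by simp
qed

text \<open>If P grows at least at rate 2 (beta + c) and D at most at rate 2 beta, then the ratio P / D
  grows at least like exp (2 c t).  This drives the uniqueness of the invariant subspace.\<close>

lemma ratio_exp_growth:
  fixes P D P' D' \<beta> :: "real \<Rightarrow> real"
  assumes S: "0 \<le> S" and cP: "continuous_on {0..S} P" and cD: "continuous_on {0..S} D"
    and dP: "\<And>r. 0 < r \<Longrightarrow> r < S \<Longrightarrow> (P has_real_derivative P' r) (at r)"
    and dD: "\<And>r. 0 < r \<Longrightarrow> r < S \<Longrightarrow> (D has_real_derivative D' r) (at r)"
    and Dpos: "\<And>r. 0 \<le> r \<Longrightarrow> r \<le> S \<Longrightarrow> D r > 0"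
    and Pnn: "\<And>r. 0 \<le> r \<Longrightarrow> r \<le> S \<Longrightarrow> P r \<ge> 0"
    and P'ge: "\<And>r. 0 < r \<Longrightarrow> r < S \<Longrightarrow> P' r \<ge> 2 * (\<beta> r + c) * P r"
    and D'le: "\<And>r. 0 < r \<Longrightarrow> r < S \<Longrightarrow> D' r \<le> 2 * \<beta> r * D r"
  shows "exp (2 * c * S) * (P 0 / D 0) \<le> P S / D S"
proof -
  define \<phi>' where "\<phi>' r = exp (- 2 * c * r) * ((P' r * D r - P r * D' r) / (D r * D r))
      + exp (- 2 * c * r) * (- 2 * c) * (P r / D r)" for r
  have "exp (- 2 * c * 0) * (P 0 / D 0) \<le> exp (- 2 * c * S) * (P S / D S)"
  proof (rule nonneg_deriv_imp_le[OF S, of "\<lambda>s. exp (- 2 * c * s) * (P s / D s)" \<phi>'])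
    show "continuous_on {0..S} (\<lambda>s. exp (- 2 * c * s) * (P s / D s))"
      by (intro continuous_intros cP cD) (use Dpos in force)
    fix r assume r: "0 < r" "r < S"
    have Dr: "D r > 0" using Dpos r by simp
    have E: "((\<lambda>s. exp (- 2 * c * s)) has_real_derivative exp (- 2 * c * r) * (- 2 * c)) (at r)"
      by (auto intro!: derivative_eq_intros)
    show "((\<lambda>s. exp (- 2 * c * s) * (P s / D s)) has_real_derivative \<phi>' r) (at r)"
      unfolding \<phi>'_def by (rule DERIV_mult'[OF E DERIV_divide[OF dP[OF r] dD[OF r]]]) (use Dr in simp)
    have "P' r * D r \<ge> 2 * (\<beta> r + c) * P r * D r"
      using mult_right_mono[OF P'ge[OF r], of "D r"] Dr by simp
    moreover have "P r * D' r \<le> P r * (2 * \<beta> r * D r)"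
      using mult_left_mono[OF D'le[OF r] Pnn] r by simp
    ultimately have num: "P' r * D r - P r * D' r - 2 * c * P r * D r \<ge> 0"
      by (simp add: algebra_simps)
    have "\<phi>' r = exp (- 2 * c * r) * ((P' r * D r - P r * D' r - 2 * c * P r * D r) / (D r * D r))"
      unfolding \<phi>'_def using Dr by (simp add: field_simps)
    thus "0 \<le> \<phi>' r" using num Dr by simp
  qed
  hence "exp (2 * c * S) * (P 0 / D 0) \<le> exp (2 * c * S) * (exp (- 2 * c * S) * (P S / D S))"
    by (intro mult_left_mono) auto
  thus ?thesis by (simp add: mult.assoc[symmetric] exp_add[symmetric])
qed

lemma first_exit:
  fixes h :: "real \<Rightarrow> real"
  assumes ab: "a \<le> b" and hc: "continuous_on {a..b} h"
    and step: "\<And>s1. a \<le> s1 \<Longrightarrow> s1 \<le> b \<Longrightarrow> (\<And>s. a \<le> s \<Longrightarrow> s < s1 \<Longrightarrow> h s < c) \<Longrightarrow> h s1 < c"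
  shows "h b < c"
proof -
  define Z where "Z = {a..b} \<inter> h -` {c..}"
  have closed: "closed Z" unfolding Z_def by (rule continuous_closed_preimage[OF hc]) auto
  have "Z = {}"
  proof (rule ccontr)
    assume ne: "Z \<noteq> {}"
    have bdd: "bdd_below Z" unfolding Z_def by (auto intro: bdd_belowI[of _ a])
    have I: "Inf Z \<in> Z" by (rule closed_contains_Inf[OF ne bdd closed])
    have "h (Inf Z) < c"
    proof (rule step)
      show "a \<le> Inf Z" "Inf Z \<le> b" using I unfolding Z_def by auto
      fix s assume s: "a \<le> s" "s < Inf Z"
      have "s \<notin> Z" using s cInf_lower[OF _ bdd, of s] by force
      thus "h s < c" using s I unfolding Z_def by auto
    qed
    thus False using I unfolding Z_def by auto
  qed
  thus ?thesis using ab unfolding Z_def by auto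
qed

lemma has_real_derivative_inner_self:
  fixes y :: "real \<Rightarrow> 'v::real_inner"
  assumes "(y has_vector_derivative y') (at t within S)"
  shows "((\<lambda>s. y s \<bullet> y s) has_real_derivative 2 * (y t \<bullet> y')) (at t within S)"
proof -
  have d: "(y has_derivative (\<lambda>h. h *\<^sub>R y')) (at t within S)"
    using assms by (simp add: has_vector_derivative_def)
  have "((\<lambda>s. y s \<bullet> y s) has_derivative (\<lambda>h. y t \<bullet> (h *\<^sub>R y') + (h *\<^sub>R y') \<bullet> y t)) (at t within S)"
    by (rule has_derivative_inner[OF d d])
  moreover have "(\<lambda>h. y t \<bullet> (h *\<^sub>R y') + (h *\<^sub>R y') \<bullet> y t) = (*) (2 * (y t \<bullet> y'))"
    by (auto simp: inner_commute algebra_simps)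
  ultimately show ?thesis by (simp add: has_field_derivative_def)
qed

lemma has_vector_derivative_at_of_nonneg:
  assumes "(y has_vector_derivative y') (at t within {0..})" and "0 < t"
  shows "(y has_vector_derivative y') (at t)"
proof -
  have "(y has_vector_derivative y') (at t within {0<..})"
    by (rule has_vector_derivative_within_subset[OF assms(1)]) auto
  thus ?thesis using assms(2) has_vector_derivative_within_open[of t "{0<..}"] by auto
qed

lemma compact_thickening:
  fixes K U :: "'a::euclidean_space set"
  assumes "compact K" "K \<subseteq> U" "open U"
  obtains r C where "r > 0" "compact C" "C \<subseteq> U" "\<And>p. p \<in> K \<Longrightarrow> cball p r \<subseteq> C"
proof -
  obtain \<epsilon> where \<epsilon>: "0 < \<epsilon>" "\<And>p. p \<in> K \<Longrightarrow> \<exists>G \<in> {U}. ball p \<epsilon> \<subseteq> G"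
    using Heine_Borel_lemma[OF assms(1), of "{U}"] assms by auto
  define C where "C = {p + w | p w. p \<in> K \<and> w \<in> cball 0 (\<epsilon> / 2)}"
  show ?thesis
  proof (rule that[of "\<epsilon> / 2" C])
    show "compact C" unfolding C_def by (rule compact_sums[OF assms(1)]) simp
    show "C \<subseteq> U"
    proof
      fix q assume "q \<in> C"
      then obtain p w where pw: "q = p + w" "p \<in> K" "norm w \<le> \<epsilon> / 2" unfolding C_def by auto
      have "q \<in> ball p \<epsilon>" using pw \<epsilon>(1) by (simp add: dist_norm)
      thus "q \<in> U" using \<epsilon>(2)[OF pw(2)] by auto
    qed
    fix p assume p: "p \<in> K"
    show "cball p (\<epsilon> / 2) \<subseteq> C"
    proof
      fix q assume "q \<in> cball p (\<epsilon> / 2)"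
      hence "q = p + (q - p) \<and> q - p \<in> cball 0 (\<epsilon> / 2)" by (simp add: dist_norm norm_minus_commute)
      thus "q \<in> C" unfolding C_def using p by blast
    qed
  qed (use \<epsilon> in simp)
qed

lemma tendsto_zero_from_quadratic_bound:
  fixes u :: "'i \<Rightarrow> 'v::real_normed_vector" and w :: "'i \<Rightarrow> 'w::real_normed_vector"
  assumes K: "K \<ge> 0" and w: "(w \<longlongrightarrow> 0) F"
    and bound: "\<And>\<eta>. \<eta> > 0 \<Longrightarrow> eventually (\<lambda>k. (norm (u k))^2 \<le> K * ((norm (w k))^2 + \<eta>^2)) F"
  shows "(u \<longlongrightarrow> 0) F"
proof (rule tendstoI)
  fix \<epsilon> :: real assume \<epsilon>: "\<epsilon> > 0"
  define \<rho> where "\<rho> = \<epsilon> / (2 * (K + 1))"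
  have \<rho>: "\<rho> > 0" and \<rho>\<epsilon>: "2 * (K + 1) * \<rho> = \<epsilon>" unfolding \<rho>_def using \<epsilon> K by simp_all
  have small: "K * (2 * \<rho>^2) < \<epsilon>^2"
  proof -
    have "K * (2 * \<rho>^2) \<le> (K + 1) * (2 * \<rho>^2)" by (intro mult_right_mono) auto
    also have "\<dots> = \<epsilon> * \<rho>" using \<rho>\<epsilon> by (simp add: power2_eq_square algebra_simps)
    also have "\<dots> < \<epsilon> * \<epsilon>"
    proof (rule mult_strict_left_mono[OF _ \<epsilon>])
      have "0 \<le> K * \<rho>" using K \<rho> by simp
      thus "\<rho> < \<epsilon>" using \<rho> \<rho>\<epsilon> by (simp add: algebra_simps)
    qed
    finally show ?thesis by (simp add: power2_eq_square)
  qed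
  have "eventually (\<lambda>k. norm (w k) < \<rho>) F" using tendstoD[OF w \<rho>] by simp
  with bound[OF \<rho>] show "eventually (\<lambda>k. dist (u k) 0 < \<epsilon>) F"
  proof eventually_elim
    case (elim k)
    have "(norm (w k))^2 \<le> \<rho>^2" using elim(2) by (intro power_mono) auto
    hence "K * ((norm (w k))^2 + \<rho>^2) \<le> K * (2 * \<rho>^2)" using K by (intro mult_left_mono) auto
    hence "(norm (u k))^2 < \<epsilon>^2" using elim(1) small by linarith
    thus ?case using \<epsilon> by (simp add: power2_less_imp_less)
  qed
qed

lemma continuous_on_sequential_closed_graph:
  fixes h :: "'a::metric_space \<Rightarrow> 'b::metric_space"
  assumes K: "compact K" and hK: "h ` S \<subseteq> K"
    and graph: "\<And>xs x l. (\<And>n. xs n \<in> S) \<Longrightarrow> x \<in> S \<Longrightarrow> xs \<longlonglongrightarrow> x \<Longrightarrow>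
                  (\<lambda>n. h (xs n)) \<longlonglongrightarrow> l \<Longrightarrow> h x = l"
  shows "continuous_on S h"
proof (rule continuous_on_sequentiallyI)
  fix u a assume u: "\<forall>n. u n \<in> S" and a: "a \<in> S" and ul: "u \<longlonglongrightarrow> a"
  show "(\<lambda>n. h (u n)) \<longlonglongrightarrow> h a"
  proof (rule ccontr)
    assume "\<not> ?thesis"
    then obtain \<epsilon> where \<epsilon>: "\<epsilon> > 0"
      and nev: "\<not> eventually (\<lambda>n. dist (h (u n)) (h a) < \<epsilon>) sequentially"
      unfolding tendsto_iff by blast
    have "infinite {n. \<not> dist (h (u n)) (h a) < \<epsilon>}"
      unfolding infinite_nat_iff_unbounded_le using nev unfolding eventually_sequentially by blast
    then obtain r1 :: "nat \<Rightarrow> nat" where r1: "strict_mono r1" "\<And>n. \<not> dist (h (u (r1 n))) (h a) < \<epsilon>"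
      using infinite_enumerate by blast
    have "\<forall>n. h (u (r1 n)) \<in> K" using u hK by auto
    then obtain l r2 where r2: "strict_mono r2" and lim: "((\<lambda>n. h (u (r1 n))) \<circ> r2) \<longlonglongrightarrow> l"
      using compact_imp_seq_compact[OF K] by (metis seq_compactE)
    have "(u \<circ> (r1 \<circ> r2)) \<longlonglongrightarrow> a" by (rule LIMSEQ_subseq_LIMSEQ[OF ul strict_mono_o[OF r1(1) r2]])
    hence la: "h a = l" using graph[of "\<lambda>n. u (r1 (r2 n))" a l] u a lim by (simp add: o_def)
    have "eventually (\<lambda>n. dist (h (u (r1 (r2 n)))) l < \<epsilon>) sequentially"
      using lim \<epsilon> unfolding tendsto_iff by (simp add: o_def)
    then obtain N where "dist (h (u (r1 (r2 N)))) l < \<epsilon>" by (meson eventually_sequentially order.refl)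
    thus False using r1(2)[of "r2 N"] la by simp
  qed
qed

lemma exp_growth_exceeds:
  fixes c p B :: real
  assumes c: "c > 0" and p: "p > 0"
  obtains S where "S \<ge> 0" "B < exp (c * S) * p"
proof
  define S where "S = max 0 (B / (c * p))"
  show "S \<ge> 0" unfolding S_def by simp
  have "B \<le> c * S * p"
  proof -
    have "B / (c * p) \<le> S" unfolding S_def by simp
    thus ?thesis using c p by (simp add: divide_le_eq mult.commute mult.left_commute)
  qed
  also have "\<dots> < (1 + c * S) * p" using p by (simp add: algebra_simps)
  also have "\<dots> \<le> exp (c * S) * p" using p exp_ge_add_one_self[of "c * S"] by simp
  finally show "B < exp (c * S) * p" .
qed

text \<open>Hypothesis 2 for the Jacobian DF = (f', g') on U.  Here jac p is DF(p), Nf and Ng are the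
  norms of its off-diagonal blocks, rate p = ell p + Ng p bounds the growth of z-components in the
  negative cone, and qform is the quadratic form L(v, 0) defining the cones.\<close>

locale cone_field =
  fixes f' :: "('a::euclidean_space \<times> 'b::euclidean_space) \<Rightarrow> ('a \<times> 'b) \<Rightarrow>\<^sub>L 'a"
    and g' :: "('a \<times> 'b) \<Rightarrow> ('a \<times> 'b) \<Rightarrow>\<^sub>L 'b"
    and U :: "('a \<times> 'b) set"
    and \<alpha> ell :: "('a \<times> 'b) \<Rightarrow> real"
    and c1 :: real
  assumes ell_nonneg: "\<And>x. x \<in> U \<Longrightarrow> ell x \<ge> 0"
    and c1_pos: "c1 > 0"
    and H2a: "\<And>x a'. x \<in> U \<Longrightarrow> a' \<bullet> f' x (a', 0) \<ge> \<alpha> x * (norm a')^2"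
    and H2z: "\<And>x z'. x \<in> U \<Longrightarrow> z' \<bullet> g' x (0, z') \<le> ell x * (norm z')^2"
    and H2c: "\<And>x. x \<in> U \<Longrightarrow>
       \<alpha> x \<ge> ell x + onorm (\<lambda>z'. f' x (0, z')) + onorm (\<lambda>a'. g' x (a', 0)) + c1"
begin

definition jac :: "('a \<times> 'b) \<Rightarrow> ('a \<times> 'b) \<Rightarrow> ('a \<times> 'b)" where
  "jac p v = (f' p v, g' p v)"

definition Nf :: "('a \<times> 'b) \<Rightarrow> real" where
  "Nf p = onorm (\<lambda>z'. f' p (0, z'))"

definition Ng :: "('a \<times> 'b) \<Rightarrow> real" where
  "Ng p = onorm (\<lambda>a'. g' p (a', 0))"

definition rate :: "('a \<times> 'b) \<Rightarrow> real" where
  "rate p = ell p + Ng p"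

definition qform :: "('a \<times> 'b) \<Rightarrow> real" where
  "qform v = fst v \<bullet> fst v - snd v \<bullet> snd v"

lemma Lfun_zero: "Lfun v 0 = qform v"
  by (simp add: Lfun_def qform_def power2_norm_eq_inner)

lemma qform_pos_imp_cone: "qform v > 0 \<Longrightarrow> norm (snd v) \<le> norm (fst v)"
  unfolding qform_def by (simp add: norm_le)

lemma qform_nonpos_imp_cone: "qform v \<le> 0 \<Longrightarrow> norm (fst v) \<le> norm (snd v)"
  unfolding qform_def by (simp add: norm_le)

lemma jac_add: "jac p (u + w) = jac p u + jac p w"
  unfolding jac_def by (simp add: blinfun.add_right)

lemma jac_diff: "jac p (u - w) = jac p u - jac p w"
  unfolding jac_def by (simp add: blinfun.diff_right)

lemma jac_scale: "jac p (c *\<^sub>R u) = c *\<^sub>R jac p u"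
  unfolding jac_def by (simp add: blinfun.scaleR_right)

lemma jac_bound: "norm (jac p v) \<le> (norm (f' p) + norm (g' p)) * norm v"
proof -
  have "norm (jac p v) \<le> norm (f' p v) + norm (g' p v)"
    unfolding jac_def by (rule norm_Pair_le)
  also have "\<dots> \<le> norm (f' p) * norm v + norm (g' p) * norm v"
    by (intro add_mono norm_blinfun)
  finally show ?thesis by (simp add: algebra_simps)
qed

lemma jac_inner_bound: "\<bar>v \<bullet> jac p v\<bar> \<le> (norm (f' p) + norm (g' p)) * (v \<bullet> v)"
proof -
  have "\<bar>v \<bullet> jac p v\<bar> \<le> norm v * norm (jac p v)" by (rule Cauchy_Schwarz_ineq2)
  also have "\<dots> \<le> norm v * ((norm (f' p) + norm (g' p)) * norm v)"
    by (intro mult_left_mono jac_bound) auto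
  finally show ?thesis by (simp add: power2_norm_eq_inner[symmetric] power2_eq_square algebra_simps)
qed

lemma jac_point_diff:
  "norm (jac p u - jac q u) \<le> (norm (f' p - f' q) + norm (g' p - g' q)) * norm u"
proof -
  have "norm (jac p u - jac q u) \<le> norm ((f' p - f' q) u) + norm ((g' p - g' q) u)"
    unfolding jac_def by (simp add: blinfun.diff_left norm_Pair_le)
  also have "\<dots> \<le> norm (f' p - f' q) * norm u + norm (g' p - g' q) * norm u"
    by (intro add_mono norm_blinfun)
  finally show ?thesis by (simp add: algebra_simps)
qed

text \<open>Energy estimate for the difference of two linearised fields, used to compare variational
  equations along nearby orbits.\<close>

lemma jac_perturbation:
  "2 * (w \<bullet> (jac p (w + u) - jac q u))
     \<le> (2 * (norm (f' p) + norm (g' p)) + 1) * (w \<bullet> w)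
       + ((norm (f' p - f' q) + norm (g' p - g' q)) * norm u)^2"
proof -
  define E where "E = norm (f' p - f' q) + norm (g' p - g' q)"
  have "w \<bullet> jac p w \<le> (norm (f' p) + norm (g' p)) * (w \<bullet> w)"
    using jac_inner_bound[of w p] by simp
  moreover have "2 * (w \<bullet> (jac p u - jac q u)) \<le> w \<bullet> w + (E * norm u)^2"
  proof -
    have "2 * (w \<bullet> (jac p u - jac q u)) \<le> 2 * (norm w * (E * norm u))"
      using norm_cauchy_schwarz[of w "jac p u - jac q u"]
        mult_left_mono[OF jac_point_diff[of p u q] norm_ge_zero[of w]] unfolding E_def by simp
    also have "\<dots> \<le> (norm w)^2 + (E * norm u)^2"
      using sum_squares_bound[of "norm w" "E * norm u"] by (simp add: mult.assoc)
    finally show ?thesis by (simp add: power2_norm_eq_inner)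
  qed
  ultimately show ?thesis unfolding E_def by (simp add: jac_add inner_add_right inner_diff_right algebra_simps)
qed

lemma jac_split: "jac p v = jac p (fst v, 0) + jac p (0, snd v)"
  by (metis jac_add add_Pair add.right_neutral add.left_neutral prod.collapse)

lemma Nf_nonneg: "0 \<le> Nf p" and Nf_bound: "norm (f' p (0, z)) \<le> Nf p * norm z"
proof -
  have "bounded_linear (\<lambda>z'. f' p (0, z'))"
    by (intro bounded_linear_compose[OF blinfun.bounded_linear_right] bounded_linear_Pair
        bounded_linear_zero bounded_linear_ident)
  thus "0 \<le> Nf p" "norm (f' p (0, z)) \<le> Nf p * norm z"
    unfolding Nf_def by (rule onorm_pos_le, rule onorm)
qed

lemma Ng_nonneg: "0 \<le> Ng p" and Ng_bound: "norm (g' p (a, 0)) \<le> Ng p * norm a"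
proof -
  have "bounded_linear (\<lambda>a'. g' p (a', 0))"
    by (intro bounded_linear_compose[OF blinfun.bounded_linear_right] bounded_linear_Pair
        bounded_linear_zero bounded_linear_ident)
  thus "0 \<le> Ng p" "norm (g' p (a, 0)) \<le> Ng p * norm a"
    unfolding Ng_def by (rule onorm_pos_le, rule onorm)
qed

lemma fst_jac_lower:
  assumes p: "p \<in> U"
  shows "fst v \<bullet> fst (jac p v) \<ge> \<alpha> p * (norm (fst v))^2 - Nf p * norm (fst v) * norm (snd v)"
proof -
  have "fst v \<bullet> fst (jac p v) = fst v \<bullet> f' p (fst v, 0) + fst v \<bullet> f' p (0, snd v)"
    by (subst jac_split) (simp add: jac_def inner_add_right)
  moreover have "- (fst v \<bullet> f' p (0, snd v)) \<le> norm (fst v) * (Nf p * norm (snd v))"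
    using Cauchy_Schwarz_ineq2[of "fst v" "f' p (0, snd v)"]
      mult_left_mono[OF Nf_bound[of p "snd v"] norm_ge_zero[of "fst v"]] by linarith
  ultimately show ?thesis using H2a[OF p, of "fst v"] by (simp add: algebra_simps)
qed

lemma snd_jac_upper:
  assumes p: "p \<in> U"
  shows "snd v \<bullet> snd (jac p v) \<le> Ng p * norm (fst v) * norm (snd v) + ell p * (norm (snd v))^2"
proof -
  have "snd v \<bullet> snd (jac p v) = snd v \<bullet> g' p (fst v, 0) + snd v \<bullet> g' p (0, snd v)"
    by (subst jac_split) (simp add: jac_def inner_add_right)
  moreover have "snd v \<bullet> g' p (fst v, 0) \<le> norm (snd v) * (Ng p * norm (fst v))"
    using Cauchy_Schwarz_ineq2[of "snd v" "g' p (fst v, 0)"]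
      mult_left_mono[OF Ng_bound[of p "fst v"] norm_ge_zero[of "snd v"]] by linarith
  ultimately show ?thesis using H2z[OF p, of "snd v"] by (simp add: algebra_simps)
qed

lemma pos_cone_expansion:
  assumes p: "p \<in> U" and c: "norm (snd v) \<le> norm (fst v)"
  shows "fst v \<bullet> fst (jac p v) \<ge> (rate p + c1) * (norm (fst v))^2"
proof -
  have "Nf p * (norm (fst v) * norm (snd v)) \<le> Nf p * (norm (fst v) * norm (fst v))"
    using c by (intro mult_left_mono Nf_nonneg) auto
  moreover have "(ell p + Nf p + Ng p + c1) * (norm (fst v))^2 \<le> \<alpha> p * (norm (fst v))^2"
    using H2c[OF p] unfolding Nf_def Ng_def by (intro mult_right_mono) auto
  ultimately show ?thesis using fst_jac_lower[OF p, of v]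
    by (simp add: rate_def power2_eq_square algebra_simps)
qed

lemma neg_cone_expansion:
  assumes p: "p \<in> U" and c: "norm (fst v) \<le> norm (snd v)"
  shows "snd v \<bullet> snd (jac p v) \<le> rate p * (norm (snd v))^2"
proof -
  have "Ng p * (norm (fst v) * norm (snd v)) \<le> Ng p * (norm (snd v) * norm (snd v))"
    using c by (intro mult_left_mono mult_right_mono Ng_nonneg) auto
  thus ?thesis using snd_jac_upper[OF p, of v] by (simp add: rate_def power2_eq_square algebra_simps)
qed

lemma qform_expansion:
  assumes p: "p \<in> U" and c: "norm (snd v) \<le> norm (fst v)"
  shows "fst v \<bullet> fst (jac p v) - snd v \<bullet> snd (jac p v) \<ge> c1 * (norm (fst v))^2"
proof -
  have "Ng p * (norm (fst v) * norm (snd v)) \<le> Ng p * (norm (fst v) * norm (fst v))"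
    using c by (intro mult_left_mono Ng_nonneg) auto
  moreover have "ell p * (norm (snd v))^2 \<le> ell p * (norm (fst v))^2"
    using c ell_nonneg[OF p] by (intro mult_left_mono power_mono) auto
  ultimately show ?thesis using snd_jac_upper[OF p, of v] pos_cone_expansion[OF p c]
    by (simp add: rate_def power2_eq_square algebra_simps)
qed

lemma pos_cone_fst_growth:
  assumes p: "p \<in> U" and pos: "qform v > 0"
  shows "fst v \<bullet> fst (jac p v) \<ge> (rate p + c1) * (fst v \<bullet> fst v)"
  using pos_cone_expansion[OF p qform_pos_imp_cone[OF pos]] by (simp add: power2_norm_eq_inner)

lemma neg_cone_snd_growth:
  assumes p: "p \<in> U" and neg: "qform v \<le> 0"
  shows "snd v \<bullet> snd (jac p v) \<le> rate p * (snd v \<bullet> snd v)"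
  using neg_cone_expansion[OF p qform_nonpos_imp_cone[OF neg]] by (simp add: power2_norm_eq_inner)

lemma neg_cone_diff_bound:
  assumes u: "qform u \<le> 0" and w: "qform w \<le> 0"
  shows "fst (u - w) \<bullet> fst (u - w) \<le> 2 * (snd u \<bullet> snd u + snd w \<bullet> snd w)"
proof -
  have "norm (fst (u - w)) \<le> norm (fst u) + norm (fst w)" by (simp add: norm_triangle_ineq4)
  also have "\<dots> \<le> norm (snd u) + norm (snd w)"
    using qform_nonpos_imp_cone[OF u] qform_nonpos_imp_cone[OF w] by linarith
  finally have "(norm (fst (u - w)))^2 \<le> (norm (snd u) + norm (snd w))^2"
    by (rule power_mono) simp
  also have "\<dots> \<le> 2 * ((norm (snd u))^2 + (norm (snd w))^2)"
    using sum_squares_bound[of "norm (snd u)" "norm (snd w)"] by (simp add: power2_sum)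
  finally show ?thesis by (simp add: power2_norm_eq_inner)
qed

end

text \<open>The flow Phi of F = (f, g) on the positively invariant set Gamma together with the
  fundamental solution Q of the variational equation (Hypothesis 3 and the definition of Q).\<close>

locale cone_flow = cone_field f' g' U \<alpha> ell c1
  for f' :: "('a::euclidean_space \<times> 'b::euclidean_space) \<Rightarrow> ('a \<times> 'b) \<Rightarrow>\<^sub>L 'a"
    and g' U \<alpha> ell c1 +
  fixes f :: "('a \<times> 'b) \<Rightarrow> 'a"
    and g :: "('a \<times> 'b) \<Rightarrow> 'b"
    and \<Gamma> :: "('a \<times> 'b) set"
    and \<Phi> :: "real \<Rightarrow> ('a \<times> 'b) \<Rightarrow> ('a \<times> 'b)"
    and Q :: "real \<Rightarrow> ('a \<times> 'b) \<Rightarrow> ('a \<times> 'b) \<Rightarrow> ('a \<times> 'b)"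
  assumes U_open: "open U"
    and f_deriv: "\<And>x. x \<in> U \<Longrightarrow> (f has_derivative blinfun_apply (f' x)) (at x)"
    and g_deriv: "\<And>x. x \<in> U \<Longrightarrow> (g has_derivative blinfun_apply (g' x)) (at x)"
    and f'_cont: "continuous_on U f'" and g'_cont: "continuous_on U g'"
    and \<Gamma>_sub: "\<Gamma> \<subseteq> U"
    and flow0: "\<And>x. x \<in> \<Gamma> \<Longrightarrow> \<Phi> 0 x = x"
    and flow_deriv: "\<And>x t. x \<in> \<Gamma> \<Longrightarrow> t \<ge> 0 \<Longrightarrow>
       ((\<lambda>s. \<Phi> s x) has_vector_derivative (f (\<Phi> t x), g (\<Phi> t x))) (at t within {0..})"
    and flow_inv: "\<And>x t. x \<in> \<Gamma> \<Longrightarrow> t \<ge> 0 \<Longrightarrow> \<Phi> t x \<in> \<Gamma>"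
    and Q0: "\<And>x v. x \<in> \<Gamma> \<Longrightarrow> Q 0 x v = v"
    and Q_deriv: "\<And>x v t. x \<in> \<Gamma> \<Longrightarrow> t \<ge> 0 \<Longrightarrow>
       ((\<lambda>s. Q s x v) has_vector_derivative
          (f' (\<Phi> t x) (Q t x v), g' (\<Phi> t x) (Q t x v))) (at t within {0..})"
begin

definition var_sol :: "('a \<times> 'b) \<Rightarrow> (real \<Rightarrow> 'a \<times> 'b) \<Rightarrow> bool" where
  "var_sol x y \<longleftrightarrow> (\<forall>t\<ge>0. (y has_vector_derivative jac (\<Phi> t x) (y t)) (at t within {0..}))"

lemma Q_var_sol: "x \<in> \<Gamma> \<Longrightarrow> var_sol x (\<lambda>s. Q s x v)"
  unfolding var_sol_def jac_def using Q_deriv by auto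

lemma var_sol_cont: assumes "var_sol x y" shows "continuous_on {0..} y"
  unfolding continuous_on_eq_continuous_within
  using assms has_vector_derivative_continuous unfolding var_sol_def by fastforce

lemma var_sol_at: "var_sol x y \<Longrightarrow> 0 < t \<Longrightarrow> (y has_vector_derivative jac (\<Phi> t x) (y t)) (at t)"
  unfolding var_sol_def by (intro has_vector_derivative_at_of_nonneg) auto

lemma var_sol_diff: "var_sol x y \<Longrightarrow> var_sol x w \<Longrightarrow> var_sol x (\<lambda>s. y s - w s)"
  unfolding var_sol_def by (auto simp: jac_diff intro!: has_vector_derivative_diff)

lemma var_sol_add: "var_sol x y \<Longrightarrow> var_sol x w \<Longrightarrow> var_sol x (\<lambda>s. y s + w s)"
  unfolding var_sol_def by (auto simp: jac_add intro!: has_vector_derivative_add)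

lemma var_sol_scale: "var_sol x y \<Longrightarrow> var_sol x (\<lambda>s. c *\<^sub>R y s)"
  unfolding var_sol_def
  using bounded_linear.has_vector_derivative[OF bounded_linear_scaleR_right, of y _ _ c]
  by (simp add: jac_scale)

lemma orbit_cont: assumes "x \<in> \<Gamma>" shows "continuous_on {0..} (\<lambda>s. \<Phi> s x)"
  unfolding continuous_on_eq_continuous_within
  using assms flow_deriv has_vector_derivative_continuous by fastforce

lemma orbit_in_U: "x \<in> \<Gamma> \<Longrightarrow> 0 \<le> s \<Longrightarrow> \<Phi> s x \<in> U"
  using flow_inv \<Gamma>_sub by blast

lemma orbit_neighbourhood:
  assumes x: "x \<in> \<Gamma>" and T: "0 \<le> T"
  obtains r C M where "r > 0" "compact C" "C \<subseteq> U" "M \<ge> 0"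
    "\<And>s. 0 \<le> s \<Longrightarrow> s \<le> T \<Longrightarrow> cball (\<Phi> s x) r \<subseteq> C"
    "\<And>q. q \<in> C \<Longrightarrow> norm (f' q) + norm (g' q) \<le> M"
proof -
  have K: "compact ((\<lambda>s. \<Phi> s x) ` {0..T})"
    by (rule compact_continuous_image[OF continuous_on_subset[OF orbit_cont[OF x]]]) auto
  have KU: "(\<lambda>s. \<Phi> s x) ` {0..T} \<subseteq> U" using orbit_in_U[OF x] by auto
  obtain r C where r: "r > 0" and C: "compact C" "C \<subseteq> U"
    and thick: "\<And>p. p \<in> (\<lambda>s. \<Phi> s x) ` {0..T} \<Longrightarrow> cball p r \<subseteq> C"
    using compact_thickening[OF K KU U_open] by blast
  have balls: "cball (\<Phi> s x) r \<subseteq> C" if "0 \<le> s" "s \<le> T" for s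
    by (rule thick) (use that in simp)
  have "\<Phi> 0 x \<in> cball (\<Phi> 0 x) r" using r by simp
  hence "\<Phi> 0 x \<in> C" using balls[OF order_refl T] by blast
  hence "C \<noteq> {}" by blast
  moreover have "continuous_on C (\<lambda>q. norm (f' q) + norm (g' q))"
    using C by (intro continuous_intros continuous_on_subset[OF f'_cont] continuous_on_subset[OF g'_cont])
  ultimately obtain q0 where q0: "\<forall>q\<in>C. norm (f' q) + norm (g' q) \<le> norm (f' q0) + norm (g' q0)"
    using continuous_attains_sup[OF C(1)] by blast
  hence Mb: "norm (f' q) + norm (g' q) \<le> norm (f' q0) + norm (g' q0)" if "q \<in> C" for q
    using that by blast
  show ?thesis by (rule that[OF r C _ balls Mb]) simp
qed

lemma orbit_jac_bound:
  assumes x: "x \<in> \<Gamma>" and T: "0 \<le> T"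
  obtains M where "M \<ge> 0" "\<And>s. 0 \<le> s \<Longrightarrow> s \<le> T \<Longrightarrow> norm (f' (\<Phi> s x)) + norm (g' (\<Phi> s x)) \<le> M"
proof (rule orbit_neighbourhood[OF x T])
  fix r C M assume r: "r > 0" and M: "M \<ge> 0"
    and balls: "\<And>s. 0 \<le> s \<Longrightarrow> s \<le> T \<Longrightarrow> cball (\<Phi> s x) r \<subseteq> C"
    and Mb: "\<And>q. q \<in> C \<Longrightarrow> norm (f' q) + norm (g' q) \<le> M"
  show ?thesis
  proof (rule that[OF M])
    fix s assume "0 \<le> s" "s \<le> T"
    hence "cball (\<Phi> s x) r \<subseteq> C" by (rule balls)
    moreover have "\<Phi> s x \<in> cball (\<Phi> s x) r" using r by simp
    ultimately show "norm (f' (\<Phi> s x)) + norm (g' (\<Phi> s x)) \<le> M" by (blast intro: Mb)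
  qed
qed

lemma var_sol_growth:
  assumes y: "var_sol x y" and s: "0 \<le> s" and M: "M \<ge> 0"
    and Mb: "\<And>r. 0 \<le> r \<Longrightarrow> r \<le> s \<Longrightarrow> norm (f' (\<Phi> r x)) + norm (g' (\<Phi> r x)) \<le> M"
  shows "y s \<bullet> y s \<le> exp (2 * M * s) * (y 0 \<bullet> y 0)"
    and "y 0 \<bullet> y 0 \<le> exp (2 * M * s) * (y s \<bullet> y s)"
proof -
  have hc: "continuous_on {0..s} (\<lambda>r. y r \<bullet> y r)"
    by (intro continuous_intros continuous_on_subset[OF var_sol_cont[OF y]]) auto
  have hd: "((\<lambda>r. y r \<bullet> y r) has_real_derivative 2 * (y r \<bullet> jac (\<Phi> r x) (y r))) (at r)"
    if "0 < r" "r < s" for r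
    by (rule has_real_derivative_inner_self[OF var_sol_at[OF y that(1)]])
  have deriv_bound: "\<bar>2 * (y r \<bullet> jac (\<Phi> r x) (y r))\<bar> \<le> 2 * M * (y r \<bullet> y r)" if "0 < r" "r < s" for r
  proof -
    have "\<bar>y r \<bullet> jac (\<Phi> r x) (y r)\<bar> \<le> (norm (f' (\<Phi> r x)) + norm (g' (\<Phi> r x))) * (y r \<bullet> y r)"
      by (rule jac_inner_bound)
    also have "\<dots> \<le> M * (y r \<bullet> y r)" using Mb[of r] that by (intro mult_right_mono) auto
    finally show ?thesis by simp
  qed
  have up: "2 * (y r \<bullet> jac (\<Phi> r x) (y r)) \<le> 2 * M * (y r \<bullet> y r) + 0" if "0 < r" "r < s" for r
    using deriv_bound[OF that] unfolding abs_le_iff by linarith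
  have low: "2 * (y r \<bullet> jac (\<Phi> r x) (y r)) \<ge> - (2 * M) * (y r \<bullet> y r)" if "0 < r" "r < s" for r
    using deriv_bound[OF that] unfolding abs_le_iff by linarith
  have "2 * M \<ge> 0" using M by simp
  from gronwall_forward[OF s hc hd up this order_refl]
  show "y s \<bullet> y s \<le> exp (2 * M * s) * (y 0 \<bullet> y 0)" by simp
  from gronwall_backward[OF s hc hd low]
  show "y 0 \<bullet> y 0 \<le> exp (2 * M * s) * (y s \<bullet> y s)" by simp
qed

lemma var_sol_zero_iff:
  assumes y: "var_sol x y" and x: "x \<in> \<Gamma>" and s: "0 \<le> s"
  shows "y s = 0 \<longleftrightarrow> y 0 = 0"
proof -
  obtain M where "M \<ge> 0" "\<And>r. 0 \<le> r \<Longrightarrow> r \<le> s \<Longrightarrow> norm (f' (\<Phi> r x)) + norm (g' (\<Phi> r x)) \<le> M"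
    using orbit_jac_bound[OF x s] by blast
  note growth = var_sol_growth[OF y s this]
  show ?thesis
  proof
    assume "y s = 0"
    with growth(2) have "y 0 \<bullet> y 0 \<le> 0" by simp
    thus "y 0 = 0" by (meson inner_gt_zero_iff not_le)
  next
    assume "y 0 = 0"
    with growth(1) have "y s \<bullet> y s \<le> 0" by simp
    thus "y s = 0" by (meson inner_gt_zero_iff not_le)
  qed
qed

lemma Q_linear: assumes x: "x \<in> \<Gamma>" and s: "0 \<le> s" shows "linear (Q s x)"
proof (rule linearI)
  fix u w
  have "var_sol x (\<lambda>r. Q r x (u + w) - (Q r x u + Q r x w))"
    by (intro var_sol_diff var_sol_add Q_var_sol x)
  from var_sol_zero_iff[OF this x s] show "Q s x (u + w) = Q s x u + Q s x w" using Q0[OF x] by simp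
next
  fix c u
  have "var_sol x (\<lambda>r. Q r x (c *\<^sub>R u) - c *\<^sub>R Q r x u)"
    by (intro var_sol_diff var_sol_scale Q_var_sol x)
  from var_sol_zero_iff[OF this x s] show "Q s x (c *\<^sub>R u) = c *\<^sub>R Q s x u" using Q0[OF x] by simp
qed

lemma Q_inj: assumes x: "x \<in> \<Gamma>" and s: "0 \<le> s" shows "inj (Q s x)"
proof -
  have "Q 0 x v = 0" if "Q s x v = 0" for v
    using var_sol_zero_iff[OF Q_var_sol[OF x] x s, of v] that by blast
  hence "\<forall>v. Q s x v = 0 \<longrightarrow> v = 0" using Q0[OF x] by metis
  thus ?thesis using linear_injective_0[OF Q_linear[OF x s]] by blast
qed

lemma Q_surj: assumes x: "x \<in> \<Gamma>" and s: "0 \<le> s" shows "surj (Q s x)"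
  by (rule linear_injective_imp_surjective[OF Q_linear[OF x s] Q_inj[OF x s]]) auto

lemma qform_deriv:
  assumes y: "var_sol x y" and t: "0 < t"
  shows "((\<lambda>s. qform (y s)) has_real_derivative
     2 * (fst (y t) \<bullet> fst (jac (\<Phi> t x) (y t))) - 2 * (snd (y t) \<bullet> snd (jac (\<Phi> t x) (y t)))) (at t)"
proof -
  have d: "(y has_vector_derivative jac (\<Phi> t x) (y t)) (at t)" by (rule var_sol_at[OF y t])
  show ?thesis unfolding qform_def
    by (intro DERIV_diff has_real_derivative_inner_self
        bounded_linear.has_vector_derivative[OF bounded_linear_fst d]
        bounded_linear.has_vector_derivative[OF bounded_linear_snd d])
qed

lemma qform_cont: "var_sol x y \<Longrightarrow> continuous_on {0..} (\<lambda>s. qform (y s))"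
  unfolding qform_def by (intro continuous_intros var_sol_cont)

lemma pos_cone_invariant:
  assumes y: "var_sol x y" and x: "x \<in> \<Gamma>" and s: "0 \<le> s0" "s0 \<le> s1"
    and pos: "qform (y s0) > 0"
  shows "qform (y s1) > 0"
proof -
  have "- qform (y s1) < 0"
  proof (rule first_exit[OF s(2)])
    show "continuous_on {s0..s1} (\<lambda>s. - qform (y s))"
      by (intro continuous_intros continuous_on_subset[OF qform_cont[OF y]]) (use s in auto)
    fix s2 assume s2: "s0 \<le> s2" "s2 \<le> s1"
      and before: "\<And>s. s0 \<le> s \<Longrightarrow> s < s2 \<Longrightarrow> - qform (y s) < 0"
    have "qform (y s0) \<le> qform (y s2)"
    proof (rule nonneg_deriv_imp_le[OF s2(1), of "\<lambda>s. qform (y s)"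
        "\<lambda>t. 2 * (fst (y t) \<bullet> fst (jac (\<Phi> t x) (y t))) - 2 * (snd (y t) \<bullet> snd (jac (\<Phi> t x) (y t)))"])
      show "continuous_on {s0..s2} (\<lambda>s. qform (y s))"
        by (rule continuous_on_subset[OF qform_cont[OF y]]) (use s in auto)
      fix r assume r: "s0 < r" "r < s2"
      show "((\<lambda>s. qform (y s)) has_real_derivative
          2 * (fst (y r) \<bullet> fst (jac (\<Phi> r x) (y r))) - 2 * (snd (y r) \<bullet> snd (jac (\<Phi> r x) (y r)))) (at r)"
        by (rule qform_deriv[OF y]) (use r s in auto)
      have "qform (y r) > 0" using before[of r] r by auto
      hence "norm (snd (y r)) \<le> norm (fst (y r))" by (rule qform_pos_imp_cone)
      hence "c1 * (norm (fst (y r)))^2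
          \<le> fst (y r) \<bullet> fst (jac (\<Phi> r x) (y r)) - snd (y r) \<bullet> snd (jac (\<Phi> r x) (y r))"
        by (rule qform_expansion[OF orbit_in_U[OF x], rotated]) (use r s in auto)
      moreover have "0 \<le> c1 * (norm (fst (y r)))^2" using c1_pos by simp
      ultimately show "0 \<le> 2 * (fst (y r) \<bullet> fst (jac (\<Phi> r x) (y r))) - 2 * (snd (y r) \<bullet> snd (jac (\<Phi> r x) (y r)))"
        by linarith
    qed
    thus "- qform (y s2) < 0" using pos by simp
  qed
  thus ?thesis by simp
qed

lemma neg_cone_backward_invariant:
  assumes y: "var_sol x y" and x: "x \<in> \<Gamma>" and s: "0 \<le> s0" "s0 \<le> s1"
    and neg: "qform (y s1) \<le> 0"
  shows "qform (y s0) \<le> 0"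
  using pos_cone_invariant[OF y x s] neg by (meson not_less)

lemma Tsp_iff: "v \<in> Tsp Q x \<longleftrightarrow> (\<forall>t\<ge>0. qform (Q t x v) \<le> 0)"
  unfolding Tsp_def Lfun_zero by simp

lemma Tsp_slice_bound:
  assumes x: "x \<in> \<Gamma>" and v: "(a, z) \<in> Tsp Q x"
  shows "norm a \<le> norm z"
proof -
  have "qform (Q 0 x (a, z)) \<le> 0" using v order_refl unfolding Tsp_iff by blast
  hence "qform (a, z) \<le> 0" using Q0[OF x] by simp
  from qform_nonpos_imp_cone[OF this] show ?thesis by simp
qed

text \<open>Existence: for every horizon t the vectors over z whose solutions end in the negative cone
  form a non-empty family; a compactness argument lets t tend to infinity.\<close>

lemma slice_neg_cone_up_to:
  assumes x: "x \<in> \<Gamma>" and t: "0 \<le> t"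
  shows "\<exists>a. \<forall>s\<in>{0..t}. qform (Q s x (a, z)) \<le> 0"
proof -
  let ?q = "Q t x"
  have lin: "linear ?q" by (rule Q_linear[OF x t])
  have qi: "?q (inv ?q w) = w" for w by (rule surj_f_inv_f[OF Q_surj[OF x t]])
  have linv: "linear (inv ?q)" by (rule inj_linear_imp_inv_linear[OF lin Q_inj[OF x t]])
  (* backward invariance: whatever Q t x maps onto the z-axis lies in the negative cone before *)
  have into_axis: "qform (Q s x (inv ?q (0, w))) \<le> 0" if "0 \<le> s" "s \<le> t" for s w
  proof (rule neg_cone_backward_invariant[OF Q_var_sol[OF x] x that])
    show "qform (Q t x (inv ?q (0, w))) \<le> 0" using qi[of "(0, w)"] by (simp add: qform_def)
  qed
  define \<phi> where "\<phi> w = snd (inv ?q (0, w))" for w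
  have lin\<phi>: "linear \<phi>" unfolding \<phi>_def
    by (intro linear_compose[OF _ linear_snd, unfolded o_def] linear_compose[OF _ linv, unfolded o_def])
       (auto intro: linearI)
  have "w = 0" if "\<phi> w = 0" for w
  proof -
    define v where "v = inv ?q (0, w)"
    have snd0: "snd v = 0" using that unfolding \<phi>_def v_def .
    have "qform v \<le> 0" using into_axis[of 0 w] t Q0[OF x] unfolding v_def by simp
    hence "fst v \<bullet> fst v \<le> 0" using snd0 by (simp add: qform_def)
    hence "fst v = 0" by (meson inner_gt_zero_iff not_le)
    hence "v = 0" using snd0 by (simp add: prod_eq_iff)
    hence "(0, w) = ?q 0" using qi[of "(0, w)"] unfolding v_def by simp
    thus ?thesis using linear_0[OF lin] by (simp add: zero_prod_def)
  qed
  hence "inj \<phi>" using linear_injective_0[OF lin\<phi>] by blast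
  hence "surj \<phi>" by (rule linear_injective_imp_surjective[OF lin\<phi>]) auto
  then obtain w where w: "\<phi> w = z" by (metis surjD)
  define a where "a = fst (inv ?q (0, w))"
  have eq: "inv ?q (0, w) = (a, z)" using w unfolding \<phi>_def a_def by (simp add: prod_eq_iff)
  have "qform (Q s x (a, z)) \<le> 0" if "s \<in> {0..t}" for s
    using into_axis[of s w] that unfolding eq by simp
  thus ?thesis by blast
qed

lemma closed_neg_cone_slice:
  assumes x: "x \<in> \<Gamma>" and s: "0 \<le> s"
  shows "closed {a. qform (Q s x (a, z)) \<le> 0}"
proof (rule closed_Collect_le)
  have "continuous_on UNIV (Q s x)"
    using Q_linear[OF x s] by (simp add: linear_conv_bounded_linear linear_continuous_on)
  hence "continuous_on UNIV (\<lambda>a. Q s x (a, z))"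
    by (rule continuous_on_compose2) (auto intro: continuous_intros)
  thus "continuous_on UNIV (\<lambda>a. qform (Q s x (a, z)))"
    unfolding qform_def by (intro continuous_intros)
qed simp

lemma Tsp_slice_nonempty:
  assumes x: "x \<in> \<Gamma>"
  shows "\<exists>a. (a, z) \<in> Tsp Q x"
proof -
  define F where "F n = {a. \<forall>s\<in>{0..real n}. qform (Q s x (a, z)) \<le> 0}" for n :: nat
  have "cball 0 (norm z) \<inter> (\<Inter>n. F n) \<noteq> {}"
  proof (rule compact_imp_fip_image)
    fix n :: nat
    have "F n = (\<Inter>s\<in>{0..real n}. {a. qform (Q s x (a, z)) \<le> 0})" unfolding F_def by auto
    thus "closed (F n)" using closed_neg_cone_slice[OF x] by (simp add: closed_INT)
  next
    fix I :: "nat set" assume I: "finite I"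
    have "0 \<le> real (Max (insert 0 I))" by simp
    then obtain a where a: "\<forall>s\<in>{0..real (Max (insert 0 I))}. qform (Q s x (a, z)) \<le> 0"
      using slice_neg_cone_up_to[OF x] by blast
    have "qform (Q 0 x (a, z)) \<le> 0" using a by simp
    hence "norm a \<le> norm z" using Q0[OF x] qform_nonpos_imp_cone[of "(a, z)"] by simp
    moreover have "a \<in> F n" if "n \<in> I" for n
    proof -
      have "n \<le> Max (insert 0 I)" using I that by simp
      thus ?thesis using a unfolding F_def by auto
    qed
    ultimately show "cball 0 (norm z) \<inter> (\<Inter>n\<in>I. F n) \<noteq> {}" by auto
  qed simp
  then obtain a where a: "\<And>n. a \<in> F n" by blast
  have "(a, z) \<in> Tsp Q x" unfolding Tsp_iff
  proof (intro allI impI)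
    fix t :: real assume t: "0 \<le> t"
    obtain n :: nat where "t \<le> real n" using real_arch_simple by blast
    thus "qform (Q t x (a, z)) \<le> 0" using a[of n] t unfolding F_def by auto
  qed
  thus ?thesis by blast
qed

text \<open>Uniqueness: if two vectors over the same z had solutions staying in the negative cone, their
  difference would lie in the positive cone, where its a-part grows faster (by the factor
  exp (2 c1 t)) than the z-parts of the two solutions, which nevertheless bound it.\<close>

lemma Tsp_snd_nonzero:
  assumes x: "x \<in> \<Gamma>" and v: "(a, z) \<in> Tsp Q x" and z: "z \<noteq> 0" and s: "0 \<le> s"
  shows "snd (Q s x (a, z)) \<noteq> 0"
proof
  assume snd0: "snd (Q s x (a, z)) = 0"
  have "qform (Q s x (a, z)) \<le> 0" using v s unfolding Tsp_iff by blast
  hence "norm (fst (Q s x (a, z))) \<le> norm (snd (Q s x (a, z)))" by (rule qform_nonpos_imp_cone)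
  hence "Q s x (a, z) = 0" using snd0 by (simp add: prod_eq_iff)
  hence "Q 0 x (a, z) = 0" using var_sol_zero_iff[OF Q_var_sol[OF x] x s] by simp
  thus False using z Q0[OF x] by (simp add: zero_prod_def)
qed

lemma cone_ratio_growth:
  assumes x: "x \<in> \<Gamma>" and sd: "var_sol x d" and su: "var_sol x yu" and sw: "var_sol x yw"
    and posd: "\<And>s. 0 \<le> s \<Longrightarrow> qform (d s) > 0"
    and negu: "\<And>s. 0 \<le> s \<Longrightarrow> qform (yu s) \<le> 0" and negw: "\<And>s. 0 \<le> s \<Longrightarrow> qform (yw s) \<le> 0"
    and Dpos: "\<And>s. 0 \<le> s \<Longrightarrow> snd (yu s) \<bullet> snd (yu s) + snd (yw s) \<bullet> snd (yw s) > 0"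
    and S: "0 \<le> S"
  defines "P \<equiv> \<lambda>s. fst (d s) \<bullet> fst (d s)"
    and "D \<equiv> \<lambda>s. snd (yu s) \<bullet> snd (yu s) + snd (yw s) \<bullet> snd (yw s)"
  shows "exp (2 * c1 * S) * (P 0 / D 0) \<le> P S / D S"
proof (rule ratio_exp_growth[OF S, where \<beta> = "\<lambda>r. rate (\<Phi> r x)"])
  show "continuous_on {0..S} P" unfolding P_def
    by (intro continuous_intros continuous_on_subset[OF var_sol_cont[OF sd]]) auto
  show "continuous_on {0..S} D" unfolding D_def
    by (intro continuous_intros continuous_on_subset[OF var_sol_cont[OF su]]
        continuous_on_subset[OF var_sol_cont[OF sw]]) auto
  fix r assume r: "0 < r" "r < S"
  show "(P has_real_derivative 2 * (fst (d r) \<bullet> fst (jac (\<Phi> r x) (d r)))) (at r)"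
    unfolding P_def by (intro has_real_derivative_inner_self
        bounded_linear.has_vector_derivative[OF bounded_linear_fst var_sol_at[OF sd r(1)]])
  show "(D has_real_derivative 2 * (snd (yu r) \<bullet> snd (jac (\<Phi> r x) (yu r)))
      + 2 * (snd (yw r) \<bullet> snd (jac (\<Phi> r x) (yw r)))) (at r)"
    unfolding D_def by (intro DERIV_add has_real_derivative_inner_self
        bounded_linear.has_vector_derivative[OF bounded_linear_snd var_sol_at[OF su r(1)]]
        bounded_linear.has_vector_derivative[OF bounded_linear_snd var_sol_at[OF sw r(1)]])
  have pU: "\<Phi> r x \<in> U" using orbit_in_U[OF x] r by simp
  show "2 * (fst (d r) \<bullet> fst (jac (\<Phi> r x) (d r))) \<ge> 2 * (rate (\<Phi> r x) + c1) * P r"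
    using pos_cone_fst_growth[OF pU posd[of r]] r unfolding P_def by (simp add: algebra_simps)
  show "2 * (snd (yu r) \<bullet> snd (jac (\<Phi> r x) (yu r)))
      + 2 * (snd (yw r) \<bullet> snd (jac (\<Phi> r x) (yw r))) \<le> 2 * rate (\<Phi> r x) * D r"
    using neg_cone_snd_growth[OF pU negu[of r]] neg_cone_snd_growth[OF pU negw[of r]] r
    unfolding D_def by (simp add: algebra_simps)
qed (use Dpos in \<open>auto simp: P_def D_def\<close>)

lemma Tsp_slice_unique:
  assumes x: "x \<in> \<Gamma>" and u: "(a1, z) \<in> Tsp Q x" and w: "(a2, z) \<in> Tsp Q x"
  shows "a1 = a2"
proof (cases "z = 0")
  case True
  thus ?thesis using Tsp_slice_bound[OF x u] Tsp_slice_bound[OF x w] by simp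
next
  case z: False
  show ?thesis
  proof (rule ccontr)
    assume ne: "a1 \<noteq> a2"
    define yu where "yu s = Q s x (a1, z)" for s
    define yw where "yw s = Q s x (a2, z)" for s
    define d where "d s = yu s - yw s" for s
    define P where "P s = fst (d s) \<bullet> fst (d s)" for s
    define D where "D s = snd (yu s) \<bullet> snd (yu s) + snd (yw s) \<bullet> snd (yw s)" for s
    have su: "var_sol x yu" and sw: "var_sol x yw" unfolding yu_def yw_def by (rule Q_var_sol[OF x])+
    have sd: "var_sol x d" unfolding d_def[abs_def] by (rule var_sol_diff[OF su sw])
    have d0: "d 0 = (a1 - a2, 0)" unfolding d_def yu_def yw_def using Q0[OF x] by simp
    have posd: "qform (d s) > 0" if "0 \<le> s" for s
      by (rule pos_cone_invariant[OF sd x order_refl that]) (use d0 ne in \<open>simp add: qform_def\<close>)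
    have negu: "qform (yu s) \<le> 0" and negw: "qform (yw s) \<le> 0" if "0 \<le> s" for s
      using u w that unfolding Tsp_iff yu_def yw_def by blast+
    have Dpos: "D s > 0" if "0 \<le> s" for s
      using Tsp_snd_nonzero[OF x u z that] inner_ge_zero[of "snd (yw s)"]
      unfolding D_def yu_def by (simp add: add_pos_nonneg)
    have "P 0 > 0" unfolding P_def using d0 ne by simp
    then obtain S where S: "S \<ge> 0" "2 < exp (2 * c1 * S) * (P 0 / D 0)"
      using exp_growth_exceeds[of "2 * c1" "P 0 / D 0" 2] c1_pos Dpos[of 0] by auto
    have "exp (2 * c1 * S) * (P 0 / D 0) \<le> P S / D S"
      unfolding P_def D_def by (rule cone_ratio_growth[OF x sd su sw posd negu negw Dpos[unfolded D_def] S(1)])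
    also have "P S \<le> 2 * D S"
      unfolding P_def D_def d_def by (rule neg_cone_diff_bound[OF negu negw]) (rule S(1))+
    hence "P S / D S \<le> 2" using Dpos[OF S(1)] by (simp add: divide_le_eq)
    finally show False using S(2) by simp
  qed
qed

lemma Hmap_in_Tsp: assumes x: "x \<in> \<Gamma>" shows "(Hmap Q x z, z) \<in> Tsp Q x"
proof -
  have "\<exists>!a. (a, z) \<in> Tsp Q x" using Tsp_slice_nonempty[OF x] Tsp_slice_unique[OF x] by blast
  thus ?thesis unfolding Hmap_def by (rule theI')
qed

lemma Hmap_eqI: "x \<in> \<Gamma> \<Longrightarrow> (a, z) \<in> Tsp Q x \<Longrightarrow> Hmap Q x z = a"
  using Tsp_slice_unique Hmap_in_Tsp by blast

text \<open>The vector field is Lipschitz on a compact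
  neighbourhood of an orbit piece, so nearby orbits stay close (Gronwall); then the variational
  equations along them differ by a uniformly small perturbation.\<close>

lemma field_lipschitz:
  assumes ball: "cball p r \<subseteq> C" and CU: "C \<subseteq> U"
    and Mb: "\<And>q. q \<in> C \<Longrightarrow> norm (f' q) + norm (g' q) \<le> M" and q: "q \<in> cball p r"
  shows "norm ((f q, g q) - (f p, g p)) \<le> M * norm (q - p)"
proof (rule differentiable_bound[of "cball p r" "\<lambda>q. (f q, g q)" "\<lambda>y. jac y"])
  fix y assume y: "y \<in> cball p r"
  hence yU: "y \<in> U" using ball CU by auto
  show "((\<lambda>q. (f q, g q)) has_derivative jac y) (at y within cball p r)"
    unfolding jac_def[abs_def]
    by (rule has_derivative_at_withinI[OF has_derivative_Pair[OF f_deriv[OF yU] g_deriv[OF yU]]])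
  have "norm (f' y) + norm (g' y) \<le> M" using y ball by (intro Mb) auto
  thus "onorm (jac y) \<le> M"
    by (intro onorm_le order_trans[OF jac_bound] mult_right_mono) auto
qed (use q in \<open>auto simp: dist_commute[of p q] intro: order_trans[OF zero_le_dist]\<close>)

lemma orbit_gap_growth:
  assumes x: "x \<in> \<Gamma>" and y: "y \<in> \<Gamma>" and s: "0 \<le> s" and CU: "C \<subseteq> U" and M: "M \<ge> 0"
    and balls: "\<And>t. 0 \<le> t \<Longrightarrow> t \<le> s \<Longrightarrow> cball (\<Phi> t x) r \<subseteq> C"
    and Mb: "\<And>q. q \<in> C \<Longrightarrow> norm (f' q) + norm (g' q) \<le> M"
    and close: "\<And>t. 0 \<le> t \<Longrightarrow> t < s \<Longrightarrow> dist (\<Phi> t y) (\<Phi> t x) \<le> r"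
  shows "(norm (\<Phi> s y - \<Phi> s x))^2 \<le> exp (2 * M * s) * (norm (y - x))^2"
proof -
  define \<delta> where "\<delta> t = \<Phi> t y - \<Phi> t x" for t
  define F where "F t = (f (\<Phi> t y), g (\<Phi> t y)) - (f (\<Phi> t x), g (\<Phi> t x))" for t
  have ec: "continuous_on {0..s} (\<lambda>t. \<delta> t \<bullet> \<delta> t)" unfolding \<delta>_def
    by (intro continuous_intros continuous_on_subset[OF orbit_cont[OF x]]
        continuous_on_subset[OF orbit_cont[OF y]]) auto
  have ed: "((\<lambda>t. \<delta> t \<bullet> \<delta> t) has_real_derivative 2 * (\<delta> t \<bullet> F t)) (at t)"
    if "0 < t" "t < s" for t
    unfolding \<delta>_def F_def using that
    by (intro has_real_derivative_inner_self has_vector_derivative_at_of_nonneg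
        has_vector_derivative_diff flow_deriv x y) auto
  have ebound: "2 * (\<delta> t \<bullet> F t) \<le> 2 * M * (\<delta> t \<bullet> \<delta> t) + 0" if "0 < t" "t < s" for t
  proof -
    have "norm (F t) \<le> M * norm (\<delta> t)" unfolding F_def \<delta>_def
      by (rule field_lipschitz[OF balls CU Mb]) (use that close[of t] in \<open>auto simp: dist_commute\<close>)
    hence "\<delta> t \<bullet> F t \<le> norm (\<delta> t) * (M * norm (\<delta> t))"
      by (intro order_trans[OF norm_cauchy_schwarz] mult_left_mono) auto
    thus ?thesis by (simp add: power2_norm_eq_inner[symmetric] power2_eq_square algebra_simps)
  qed
  have "\<delta> s \<bullet> \<delta> s \<le> exp (2 * M * (s - 0)) * (\<delta> 0 \<bullet> \<delta> 0 + 0 * (s - 0))"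
    using gronwall_forward[OF s ec ed ebound] M by simp
  thus ?thesis unfolding \<delta>_def using flow0[OF x] flow0[OF y] by (simp add: power2_norm_eq_inner)
qed

lemma orbit_close:
  assumes x: "x \<in> \<Gamma>" and y: "y \<in> \<Gamma>" and T: "0 \<le> T" and CU: "C \<subseteq> U" and M: "M \<ge> 0"
    and balls: "\<And>s. 0 \<le> s \<Longrightarrow> s \<le> T \<Longrightarrow> cball (\<Phi> s x) r \<subseteq> C"
    and Mb: "\<And>q. q \<in> C \<Longrightarrow> norm (f' q) + norm (g' q) \<le> M"
    and close: "norm (y - x) < r * exp (- M * T)"
    and s: "0 \<le> s" "s \<le> T"
  shows "dist (\<Phi> s y) (\<Phi> s x) \<le> exp (M * T) * norm (y - x)" and "\<Phi> s y \<in> C"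
proof -
  define gap where "gap t = dist (\<Phi> t y) (\<Phi> t x)" for t
  have Kr: "exp (M * T) * norm (y - x) < r"
  proof -
    have "exp (M * T) * norm (y - x) < exp (M * T) * (r * exp (- M * T))"
      using close by (intro mult_strict_left_mono) auto
    thus ?thesis by (simp add: mult.left_commute[of _ r] exp_minus_inverse)
  qed
  have bound: "gap s1 \<le> exp (M * T) * norm (y - x)"
    if s1: "0 \<le> s1" "s1 \<le> T" and before: "\<And>t. 0 \<le> t \<Longrightarrow> t < s1 \<Longrightarrow> gap t < r" for s1
  proof -
    have "(gap s1)^2 \<le> exp (2 * M * s1) * (norm (y - x))^2"
      unfolding gap_def dist_norm
    proof (rule orbit_gap_growth[OF x y s1(1) CU M _ Mb])
      show "cball (\<Phi> t x) r \<subseteq> C" if "0 \<le> t" "t \<le> s1" for t using that s1 by (intro balls) auto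
      show "dist (\<Phi> t y) (\<Phi> t x) \<le> r" if "0 \<le> t" "t < s1" for t
        using before[OF that] unfolding gap_def by simp
    qed
    also have "\<dots> = (exp (M * s1) * norm (y - x))^2"
      by (simp add: power_mult_distrib exp_double[symmetric] mult.assoc)
    finally have "gap s1 \<le> exp (M * s1) * norm (y - x)" by (rule power2_le_imp_le) simp
    also have "\<dots> \<le> exp (M * T) * norm (y - x)"
      using s1 M by (intro mult_right_mono) (auto intro: mult_left_mono)
    finally show ?thesis .
  qed
  have less: "gap b < r" if b: "0 \<le> b" "b \<le> T" for b
  proof (rule first_exit[OF b(1)])
    show "continuous_on {0..b} gap" unfolding gap_def
      by (intro continuous_intros continuous_on_subset[OF orbit_cont[OF x]]
          continuous_on_subset[OF orbit_cont[OF y]]) auto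
    fix s1 assume "0 \<le> s1" "s1 \<le> b" "\<And>t. 0 \<le> t \<Longrightarrow> t < s1 \<Longrightarrow> gap t < r"
    thus "gap s1 < r" using bound[of s1] b Kr by simp
  qed
  have "\<And>t. 0 \<le> t \<Longrightarrow> t < s \<Longrightarrow> gap t < r" using less s by simp
  thus "dist (\<Phi> s y) (\<Phi> s x) \<le> exp (M * T) * norm (y - x)" using bound[OF s] unfolding gap_def by simp
  have "\<Phi> s y \<in> cball (\<Phi> s x) r" using less[OF s] unfolding gap_def by (simp add: dist_commute)
  thus "\<Phi> s y \<in> C" using balls[OF s] by blast
qed

lemma var_sol_perturbation:
  assumes x: "x \<in> \<Gamma>" and y: "y \<in> \<Gamma>" and T: "0 \<le> T" and M: "M \<ge> 0" and B: "B \<ge> 0"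
    and My: "\<And>s. 0 \<le> s \<Longrightarrow> s \<le> T \<Longrightarrow> norm (f' (\<Phi> s y)) + norm (g' (\<Phi> s y)) \<le> M"
    and near: "\<And>s. 0 \<le> s \<Longrightarrow> s \<le> T \<Longrightarrow>
       norm (f' (\<Phi> s y) - f' (\<Phi> s x)) + norm (g' (\<Phi> s y) - g' (\<Phi> s x)) \<le> \<eta>"
    and Bx: "\<And>s. 0 \<le> s \<Longrightarrow> s \<le> T \<Longrightarrow> Q s x v \<bullet> Q s x v \<le> B"
  shows "(norm (Q T y v' - Q T x v))^2 \<le> exp ((2 * M + 1) * T) * ((norm (v' - v))^2 + \<eta>^2 * B * T)"
proof -
  define w where "w s = Q s y v' - Q s x v" for s
  define W where "W t = jac (\<Phi> t y) (Q t y v') - jac (\<Phi> t x) (Q t x v)" for t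
  have sy: "var_sol y (\<lambda>s. Q s y v')" and sx: "var_sol x (\<lambda>s. Q s x v)" by (rule Q_var_sol[OF y], rule Q_var_sol[OF x])
  have ec: "continuous_on {0..T} (\<lambda>s. w s \<bullet> w s)" unfolding w_def
    by (intro continuous_intros continuous_on_subset[OF var_sol_cont[OF sy]]
        continuous_on_subset[OF var_sol_cont[OF sx]]) auto
  have ed: "((\<lambda>s. w s \<bullet> w s) has_real_derivative 2 * (w t \<bullet> W t)) (at t)" if "0 < t" "t < T" for t
    unfolding w_def W_def
    by (intro has_real_derivative_inner_self has_vector_derivative_diff var_sol_at[OF sy that(1)]
        var_sol_at[OF sx that(1)])
  have ebound: "2 * (w t \<bullet> W t) \<le> (2 * M + 1) * (w t \<bullet> w t) + \<eta>^2 * B" if t: "0 < t" "t < T" for t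
  proof -
    have "W t = jac (\<Phi> t y) (w t + Q t x v) - jac (\<Phi> t x) (Q t x v)" unfolding W_def w_def by simp
    hence "2 * (w t \<bullet> W t) \<le> (2 * (norm (f' (\<Phi> t y)) + norm (g' (\<Phi> t y))) + 1) * (w t \<bullet> w t)
        + ((norm (f' (\<Phi> t y) - f' (\<Phi> t x)) + norm (g' (\<Phi> t y) - g' (\<Phi> t x))) * norm (Q t x v))^2"
      using jac_perturbation by simp
    also have "\<dots> \<le> (2 * M + 1) * (w t \<bullet> w t) + (\<eta> * norm (Q t x v))^2"
      using My[of t] near[of t] t by (intro add_mono mult_right_mono power_mono) auto
    also have "(\<eta> * norm (Q t x v))^2 \<le> \<eta>^2 * B"
      using Bx[of t] t by (simp add: power_mult_distrib power2_norm_eq_inner mult_left_mono)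
    finally show ?thesis by simp
  qed
  have "w T \<bullet> w T \<le> exp ((2 * M + 1) * (T - 0)) * (w 0 \<bullet> w 0 + \<eta>^2 * B * (T - 0))"
    by (rule gronwall_forward[OF T ec ed ebound]) (use M B in auto)
  thus ?thesis unfolding w_def using Q0[OF x] Q0[OF y] by (simp add: power2_norm_eq_inner)
qed

lemma jac_uniformly_continuous:
  assumes C: "compact C" "C \<subseteq> U" and e: "e > 0"
  obtains d where "d > 0"
    "\<And>p q. p \<in> C \<Longrightarrow> q \<in> C \<Longrightarrow> dist q p < d \<Longrightarrow> norm (f' q - f' p) + norm (g' q - g' p) < e"
proof -
  have uf: "uniformly_continuous_on C f'"
    by (rule compact_uniformly_continuous[OF continuous_on_subset[OF f'_cont C(2)] C(1)])
  have ug: "uniformly_continuous_on C g'"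
    by (rule compact_uniformly_continuous[OF continuous_on_subset[OF g'_cont C(2)] C(1)])
  obtain d1 where d1: "d1 > 0" "\<forall>p\<in>C. \<forall>q\<in>C. dist q p < d1 \<longrightarrow> dist (f' q) (f' p) < e / 2"
    using uf e unfolding uniformly_continuous_on_def by (meson half_gt_zero)
  obtain d2 where d2: "d2 > 0" "\<forall>p\<in>C. \<forall>q\<in>C. dist q p < d2 \<longrightarrow> dist (g' q) (g' p) < e / 2"
    using ug e unfolding uniformly_continuous_on_def by (meson half_gt_zero)
  show ?thesis
  proof (rule that[of "min d1 d2"])
    show "min d1 d2 > 0" using d1 d2 by simp
    fix p q assume "p \<in> C" "q \<in> C" "dist q p < min d1 d2"
    hence "dist (f' q) (f' p) < e / 2" "dist (g' q) (g' p) < e / 2" using d1 d2 by auto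
    thus "norm (f' q - f' p) + norm (g' q - g' p) < e" by (simp add: dist_norm)
  qed
qed

lemma orbit_jac_close:
  assumes x: "x \<in> \<Gamma>" and T: "0 \<le> T" and r: "r > 0" and C: "compact C" "C \<subseteq> U" and M: "M \<ge> 0"
    and balls: "\<And>s. 0 \<le> s \<Longrightarrow> s \<le> T \<Longrightarrow> cball (\<Phi> s x) r \<subseteq> C"
    and Mb: "\<And>q. q \<in> C \<Longrightarrow> norm (f' q) + norm (g' q) \<le> M" and \<eta>: "\<eta> > 0"
  obtains \<delta> where "\<delta> > 0"
    "\<And>y s. y \<in> \<Gamma> \<Longrightarrow> norm (y - x) < \<delta> \<Longrightarrow> 0 \<le> s \<Longrightarrow> s \<le> T \<Longrightarrow> \<Phi> s y \<in> C \<and>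
       norm (f' (\<Phi> s y) - f' (\<Phi> s x)) + norm (g' (\<Phi> s y) - g' (\<Phi> s x)) \<le> \<eta>"
proof -
  obtain d where d: "d > 0" and unif: "\<And>p q. p \<in> C \<Longrightarrow> q \<in> C \<Longrightarrow> dist q p < d \<Longrightarrow>
      norm (f' q - f' p) + norm (g' q - g' p) < \<eta>"
    using jac_uniformly_continuous[OF C \<eta>] by blast
  show ?thesis
  proof (rule that[of "min r d * exp (- M * T)"])
    show "min r d * exp (- M * T) > 0" using r d by simp
    fix y s assume y: "y \<in> \<Gamma>" and close: "norm (y - x) < min r d * exp (- M * T)"
      and s: "0 \<le> s" "s \<le> T"
    have E: "0 \<le> exp (- M * T)" by simp
    have close_r: "norm (y - x) < r * exp (- M * T)"
      using close mult_right_mono[OF min.cobounded1 E, of r d] by linarith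
    have close_d: "norm (y - x) < d * exp (- M * T)"
      using close mult_right_mono[OF min.cobounded2 E, of r d] by linarith
    note orbit = orbit_close[OF x y T C(2) M balls Mb close_r]
    have yC: "\<Phi> s y \<in> C" using orbit(2) s by simp
    have "dist (\<Phi> s y) (\<Phi> s x) \<le> exp (M * T) * norm (y - x)" using orbit(1) s by simp
    also have "\<dots> < exp (M * T) * (d * exp (- M * T))" using close_d by (intro mult_strict_left_mono) auto
    also have "\<dots> = d" by (simp add: exp_minus_inverse mult.left_commute[of _ d])
    finally have "dist (\<Phi> s y) (\<Phi> s x) < d" .
    moreover have "\<Phi> s x \<in> C" using balls[OF s] r by (auto intro: subsetD[of "cball _ r"])
    ultimately show "\<Phi> s y \<in> C \<and>
        norm (f' (\<Phi> s y) - f' (\<Phi> s x)) + norm (g' (\<Phi> s y) - g' (\<Phi> s x)) \<le> \<eta>"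
      using unif yC by fastforce
  qed
qed

lemma Q_tendsto:
  assumes x: "x \<in> \<Gamma>" and T: "0 \<le> T" and xs: "\<And>k. xs k \<in> \<Gamma>"
    and xl: "xs \<longlonglongrightarrow> x" and vl: "vs \<longlonglongrightarrow> v"
  shows "(\<lambda>k. Q T (xs k) (vs k)) \<longlonglongrightarrow> Q T x v"
proof (rule orbit_neighbourhood[OF x T])
  fix r C M assume r: "r > 0" and C: "compact C" "C \<subseteq> U" and M: "M \<ge> 0"
    and balls: "\<And>s. 0 \<le> s \<Longrightarrow> s \<le> T \<Longrightarrow> cball (\<Phi> s x) r \<subseteq> C"
    and Mb: "\<And>q. q \<in> C \<Longrightarrow> norm (f' q) + norm (g' q) \<le> M"
  have xC: "\<Phi> s x \<in> C" if "0 \<le> s" "s \<le> T" for s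
  proof -
    have "\<Phi> s x \<in> cball (\<Phi> s x) r" using r by simp
    thus ?thesis using balls[OF that] by blast
  qed
  define B where "B = exp (2 * M * T) * (v \<bullet> v)"
  have B: "B \<ge> 0" unfolding B_def by simp
  have Bx: "Q s x v \<bullet> Q s x v \<le> B" if s: "0 \<le> s" "s \<le> T" for s
  proof -
    have "Q s x v \<bullet> Q s x v \<le> exp (2 * M * s) * (Q 0 x v \<bullet> Q 0 x v)"
      by (rule var_sol_growth(1)[OF Q_var_sol[OF x] s(1) M])
        (use xC Mb s in auto)
    also have "\<dots> = exp (2 * M * s) * (v \<bullet> v)" using Q0[OF x] by simp
    also have "\<dots> \<le> exp (2 * M * T) * (v \<bullet> v)"
      using s M by (intro mult_right_mono) (auto intro: mult_left_mono)
    finally show ?thesis unfolding B_def .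
  qed
  define K where "K = exp ((2 * M + 1) * T) * (1 + B * T)"
  have K: "K \<ge> 0" unfolding K_def using B T by simp
  have "(\<lambda>k. Q T (xs k) (vs k) - Q T x v) \<longlonglongrightarrow> 0"
  proof (rule tendsto_zero_from_quadratic_bound[OF K])
    show "(\<lambda>k. vs k - v) \<longlonglongrightarrow> 0" using vl by (rule LIM_zero)
    fix \<eta> :: real assume \<eta>: "\<eta> > 0"
    obtain \<delta> where \<delta>: "\<delta> > 0" and near: "\<And>y s. y \<in> \<Gamma> \<Longrightarrow> norm (y - x) < \<delta> \<Longrightarrow> 0 \<le> s \<Longrightarrow> s \<le> T \<Longrightarrow>
        \<Phi> s y \<in> C \<and> norm (f' (\<Phi> s y) - f' (\<Phi> s x)) + norm (g' (\<Phi> s y) - g' (\<Phi> s x)) \<le> \<eta>"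
      using orbit_jac_close[OF x T r C M balls Mb \<eta>] by blast
    have "eventually (\<lambda>k. norm (xs k - x) < \<delta>) sequentially"
      using xl \<delta> unfolding tendsto_iff dist_norm by blast
    thus "eventually (\<lambda>k. (norm (Q T (xs k) (vs k) - Q T x v))^2
        \<le> K * ((norm (vs k - v))^2 + \<eta>^2)) sequentially"
    proof eventually_elim
      case (elim k)
      have "(norm (Q T (xs k) (vs k) - Q T x v))^2
          \<le> exp ((2 * M + 1) * T) * ((norm (vs k - v))^2 + \<eta>^2 * B * T)"
        by (rule var_sol_perturbation[OF x xs[of k] T M B _ _ Bx])
          (use near[OF xs elim] Mb in \<open>blast+\<close>)
      also have "\<dots> \<le> K * ((norm (vs k - v))^2 + \<eta>^2)"
      proof -
        have "(norm (vs k - v))^2 + \<eta>^2 * B * T \<le> (1 + B * T) * ((norm (vs k - v))^2 + \<eta>^2)"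
          using B T by (simp add: algebra_simps)
        thus ?thesis unfolding K_def by (simp add: mult.assoc)
      qed
      finally show ?case .
    qed
  qed
  thus ?thesis by (rule LIM_zero_cancel)
qed

lemma Tsp_limit:
  assumes x: "x \<in> \<Gamma>" and xs: "\<And>k. xs k \<in> \<Gamma>" and xl: "xs \<longlonglongrightarrow> x"
    and as: "\<And>k. (as k, z) \<in> Tsp Q (xs k)" and al: "as \<longlonglongrightarrow> a"
  shows "(a, z) \<in> Tsp Q x"
  unfolding Tsp_iff
proof (intro allI impI)
  fix t :: real assume t: "0 \<le> t"
  have "(\<lambda>k. Q t (xs k) (as k, z)) \<longlonglongrightarrow> Q t x (a, z)"
    by (rule Q_tendsto[OF x t xs xl]) (intro tendsto_intros al)
  hence "(\<lambda>k. qform (Q t (xs k) (as k, z))) \<longlonglongrightarrow> qform (Q t x (a, z))"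
    unfolding qform_def by (intro tendsto_intros)
  moreover have "\<forall>k. qform (Q t (xs k) (as k, z)) \<le> 0" using as t unfolding Tsp_iff by blast
  ultimately show "qform (Q t x (a, z)) \<le> 0" by (intro LIMSEQ_le_const2) auto
qed

theorem Hmap_continuous: "continuous_on \<Gamma> (\<lambda>x. Hmap Q x z)"
proof (rule continuous_on_sequential_closed_graph)
  show "compact (cball (0::'a) (norm z))" by simp
  show "(\<lambda>x. Hmap Q x z) ` \<Gamma> \<subseteq> cball 0 (norm z)"
    using Tsp_slice_bound[OF _ Hmap_in_Tsp] by auto
  fix xs x l assume xs: "\<And>n. xs n \<in> \<Gamma>" and x: "x \<in> \<Gamma>" and xl: "xs \<longlonglongrightarrow> x"
    and lim: "(\<lambda>n. Hmap Q (xs n) z) \<longlonglongrightarrow> l"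
  show "Hmap Q x z = l"
    by (rule Hmap_eqI[OF x Tsp_limit[OF x xs xl Hmap_in_Tsp[OF xs] lim]])
qed

end

theorem lemma2p10:
  fixes f :: "('a::euclidean_space \<times> 'b::euclidean_space) \<Rightarrow> 'a"
    and g :: "('a \<times> 'b) \<Rightarrow> 'b"
    and f' :: "('a \<times> 'b) \<Rightarrow> ('a \<times> 'b) \<Rightarrow>\<^sub>L 'a"
    and g' :: "('a \<times> 'b) \<Rightarrow> ('a \<times> 'b) \<Rightarrow>\<^sub>L 'b"
    and U \<Gamma> :: "('a \<times> 'b) set"
    and \<alpha> ell :: "('a \<times> 'b) \<Rightarrow> real"
    and c1 :: real
    and \<Phi> :: "real \<Rightarrow> ('a \<times> 'b) \<Rightarrow> ('a \<times> 'b)"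
    and Q :: "real \<Rightarrow> ('a \<times> 'b) \<Rightarrow> ('a \<times> 'b) \<Rightarrow> ('a \<times> 'b)"
    and zz :: 'b
  assumes U_open: "open U" and U_convex: "convex U"
    and H1: "\<exists>d>0. \<forall>x\<in>U. Ccone x \<inter> U \<subseteq> boxd d x"
    and f_deriv: "\<And>x. x \<in> U \<Longrightarrow> (f has_derivative blinfun_apply (f' x)) (at x)"
    and g_deriv: "\<And>x. x \<in> U \<Longrightarrow> (g has_derivative blinfun_apply (g' x)) (at x)"
    and f'_cont: "continuous_on U f'" and g'_cont: "continuous_on U g'"
    and \<alpha>_cont: "continuous_on U \<alpha>" and ell_cont: "continuous_on U ell"
    and \<alpha>_pos: "\<And>x. x \<in> U \<Longrightarrow> \<alpha> x > 0"
    and ell_nonneg: "\<And>x. x \<in> U \<Longrightarrow> ell x \<ge> 0"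
    and c1_pos: "c1 > 0"
    and H2a: "\<And>x a'. x \<in> U \<Longrightarrow> a' \<bullet> f' x (a', 0) \<ge> \<alpha> x * (norm a')^2"
    and H2z: "\<And>x z'. x \<in> U \<Longrightarrow> z' \<bullet> g' x (0, z') \<le> ell x * (norm z')^2"
    and H2c: "\<And>x. x \<in> U \<Longrightarrow>
       \<alpha> x \<ge> ell x + onorm (\<lambda>z'. f' x (0, z')) + onorm (\<lambda>a'. g' x (a', 0)) + c1"
    and \<Gamma>_sub: "\<Gamma> \<subseteq> U"
    and flow0: "\<And>x. x \<in> \<Gamma> \<Longrightarrow> \<Phi> 0 x = x"
    and flow_deriv: "\<And>x t. x \<in> \<Gamma> \<Longrightarrow> t \<ge> 0 \<Longrightarrow>
       ((\<lambda>s. \<Phi> s x) has_vector_derivative (f (\<Phi> t x), g (\<Phi> t x))) (at t within {0..})"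
    and flow_inv: "\<And>x t. x \<in> \<Gamma> \<Longrightarrow> t \<ge> 0 \<Longrightarrow> \<Phi> t x \<in> \<Gamma>"
    and proj: "snd ` \<Gamma> = snd ` U"
    and Q0: "\<And>x v. x \<in> \<Gamma> \<Longrightarrow> Q 0 x v = v"
    and Q_deriv: "\<And>x v t. x \<in> \<Gamma> \<Longrightarrow> t \<ge> 0 \<Longrightarrow>
       ((\<lambda>s. Q s x v) has_vector_derivative
          (f' (\<Phi> t x) (Q t x v), g' (\<Phi> t x) (Q t x v))) (at t within {0..})"
  shows "continuous_on \<Gamma> (\<lambda>x. Hmap Q x zz)"
proof -
  interpret cone_flow f' g' U \<alpha> ell c1 f g \<Gamma> \<Phi> Q
    by (intro cone_flow.intro cone_field.intro cone_flow_axioms.intro) (fact assms)+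
  show ?thesis by (rule Hmap_continuous)
qed

end
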